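(* The holomorphic volume form is $\tilde\nabla$-parallel: $\tilde\nabla_a\Omega_{bcd}=0$.
   Context: $X$ is a compact Calabi–Yau threefold with full $SU(3)$ holonomy, Ricci-flat Kähler metric $g$, holomorphic volume form $\Omega=\tfrac16\Omega_{abc}dz^{abc}$. $h\in\mathcal H^{0,1}(T^{1,0}X)$ is $g$-harmonic with components $h^a{}_{\bar b}$, and $\tfrac16h^a\wedge h^b\wedge h^c\Omega_{abc}=|h|\bar\Omega$ with $|h|$ a nonzero constant; $(h^{-1})^{\bar a}{}_b$ is the inverse matrix. The connection $\tilde\nabla$ acts by $\tilde\nabla_a\beta^b=h^b{}_{\bar c}\,\partial_a\big((h^{-1})^{\bar c}{}_c\beta^c\big)$ on holomorphic-vector indices and $\tilde\nabla_a\alpha_b=(h^{-1})^{\bar c}{}_b\,\partial_a\big(h^d{}_{\bar c}\alpha_d\big)$ on holomorphic-covector indices, extended to tensors by the Leibniz rule. *)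

theory Defs
  imports "HOL-Analysis.Analysis"
begin

text \<open>Local holomorphic chart of the threefold: an open set U of complex^3 with
  holomorphic coordinates z^1, z^2, z^3 (indices range over the type 3).\<close>

type_synonym pt = "complex ^ 3"

text \<open>Wirtinger derivative d/dz^a of a complex function at p:
  (d/dx_a - i d/dy_a)/2, with z^a = x_a + i y_a.\<close>
definition wirt :: "3 \<Rightarrow> (pt \<Rightarrow> complex) \<Rightarrow> pt \<Rightarrow> complex" where
  "wirt a f p =
     (vector_derivative (\<lambda>t::real. f (p + t *\<^sub>R axis a 1)) (at 0)
      - \<i> * vector_derivative (\<lambda>t::real. f (p + t *\<^sub>R axis a \<i>)) (at 0)) / 2"

definition holo3 :: "pt set \<Rightarrow> (pt \<Rightarrow> complex) \<Rightarrow> bool" where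
  "holo3 U f \<longleftrightarrow> (\<forall>p\<in>U. \<exists>L. (f has_derivative L) (at p) \<and>
                        (\<forall>(c::complex) v. L (c *s v) = c * L v))"

text \<open>h p $ a $ b = h^a_{bar b}(p);  hinv h p $ b $ a = (h^{-1})^{bar b}_a(p).\<close>
definition hinv :: "(pt \<Rightarrow> complex^3^3) \<Rightarrow> pt \<Rightarrow> complex^3^3" where
  "hinv h p = matrix_inv (h p)"

text \<open>Connection coefficients read off from the covector rule
  nabla_a alpha_b = (h^{-1})^{bar c}_b d_a (h^d_{bar c} alpha_d)
   = d_a alpha_b + Gamma_{a b}^d alpha_d,
  Gamma_{a b}^d = (h^{-1})^{bar c}_b d_a h^d_{bar c}.\<close>
definition Gam :: "(pt \<Rightarrow> complex^3^3) \<Rightarrow> 3 \<Rightarrow> 3 \<Rightarrow> 3 \<Rightarrow> pt \<Rightarrow> complex" where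
  "Gam h a b d p = (\<Sum>c\<in>UNIV. hinv h p $ c $ b * wirt a (\<lambda>q. h q $ d $ c) p)"

definition nabla_cov :: "(pt \<Rightarrow> complex^3^3) \<Rightarrow> 3 \<Rightarrow> (3 \<Rightarrow> pt \<Rightarrow> complex) \<Rightarrow> 3 \<Rightarrow> pt \<Rightarrow> complex" where
  "nabla_cov h a \<alpha> b p =
     (\<Sum>c\<in>UNIV. hinv h p $ c $ b * wirt a (\<lambda>q. \<Sum>d\<in>UNIV. h q $ d $ c * \<alpha> d q) p)"

definition nabla3 :: "(pt \<Rightarrow> complex^3^3) \<Rightarrow> 3 \<Rightarrow> (pt \<Rightarrow> 3 \<Rightarrow> 3 \<Rightarrow> 3 \<Rightarrow> complex)
                      \<Rightarrow> 3 \<Rightarrow> 3 \<Rightarrow> 3 \<Rightarrow> pt \<Rightarrow> complex" where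
  "nabla3 h a T b c d p =
     wirt a (\<lambda>q. T q b c d) p
     + (\<Sum>e\<in>UNIV. Gam h a b e p * T p e c d)
     + (\<Sum>e\<in>UNIV. Gam h a c e p * T p b e d)
     + (\<Sum>e\<in>UNIV. Gam h a d e p * T p b c e)"

end

theory Submission imports Defs begin

text \<open>
  An alternating 3-tensor is a single function times the Levi-Civita symbol,
  \<open>\<Omega>\<^sub>b\<^sub>c\<^sub>d = \<epsilon>\<^sub>b\<^sub>c\<^sub>d \<omega>\<close>, and the Leibniz rule turns the three connection terms
  into the trace \<open>\<Gamma>\<^sub>a\<^sub>e\<^sup>e\<close>, so \<open>\<nabla>\<^sub>a\<Omega> = \<epsilon> (\<partial>\<^sub>a\<omega> + \<Gamma>\<^sub>a\<^sub>e\<^sup>e \<omega>)\<close>.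
  By Jacobi's formula \<open>\<Gamma>\<^sub>a\<^sub>e\<^sup>e = \<partial>\<^sub>a log det h\<close>, so this bracket is
  \<open>\<partial>\<^sub>a(det h \<omega>) / det h\<close>. The volume condition says
  \<open>det h \<omega> = |h| cnj \<omega>\<close>, which is antiholomorphic and hence killed by \<open>\<partial>\<^sub>a\<close>.
\<close>

lemma vector_derivative_along_line:
  assumes "(f has_derivative L) (at p)"
  shows "vector_derivative (\<lambda>t::real. f (p + t *\<^sub>R v)) (at 0) = L v"
proof -
  have line: "((\<lambda>t::real. p + t *\<^sub>R v) has_derivative (\<lambda>t. t *\<^sub>R v)) (at 0)"
    by (auto intro!: derivative_eq_intros)
  have "((\<lambda>t::real. f (p + t *\<^sub>R v)) has_derivative (\<lambda>t. L (t *\<^sub>R v))) (at 0)"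
    using diff_chain_at[OF line] assms by (simp add: o_def)
  moreover have "(\<lambda>t. L (t *\<^sub>R v)) = (\<lambda>t. t *\<^sub>R L v)"
    using has_derivative_linear[OF assms] by (simp add: linear_scale)
  ultimately have "((\<lambda>t::real. f (p + t *\<^sub>R v)) has_vector_derivative L v) (at 0)"
    unfolding has_vector_derivative_def by simp
  then show ?thesis
    by (rule vector_derivative_at)
qed

lemma wirt_eq_derivative:
  assumes "(f has_derivative L) (at p)"
  shows "wirt a f p = (L (axis a 1) - \<i> * L (axis a \<i>)) / 2"
  unfolding wirt_def vector_derivative_along_line[OF assms] ..

lemma wirt_add:
  assumes "f differentiable at p" "g differentiable at p"
  shows "wirt a (\<lambda>q. f q + g q) p = wirt a f p + wirt a g p"
proof -
  obtain F G where F: "(f has_derivative F) (at p)" and G: "(g has_derivative G) (at p)"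
    using assms unfolding differentiable_def by blast
  show ?thesis
    unfolding wirt_eq_derivative[OF has_derivative_add[OF F G]]
      wirt_eq_derivative[OF F] wirt_eq_derivative[OF G]
    by (simp add: field_simps)
qed

lemma wirt_diff:
  assumes "f differentiable at p" "g differentiable at p"
  shows "wirt a (\<lambda>q. f q - g q) p = wirt a f p - wirt a g p"
proof -
  obtain F G where F: "(f has_derivative F) (at p)" and G: "(g has_derivative G) (at p)"
    using assms unfolding differentiable_def by blast
  show ?thesis
    unfolding wirt_eq_derivative[OF has_derivative_diff[OF F G]]
      wirt_eq_derivative[OF F] wirt_eq_derivative[OF G]
    by (simp add: field_simps)
qed

lemma wirt_mult:
  assumes "f differentiable at p" "g differentiable at p"
  shows "wirt a (\<lambda>q. f q * g q) p = f p * wirt a g p + wirt a f p * g p"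
proof -
  obtain F G where F: "(f has_derivative F) (at p)" and G: "(g has_derivative G) (at p)"
    using assms unfolding differentiable_def by blast
  show ?thesis
    unfolding wirt_eq_derivative[OF has_derivative_mult[OF F G]]
      wirt_eq_derivative[OF F] wirt_eq_derivative[OF G]
    by (simp add: field_simps)
qed

lemma wirt_cmult:
  assumes "f differentiable at p"
  shows "wirt a (\<lambda>q. k * f q) p = k * wirt a f p"
proof -
  obtain F where F: "(f has_derivative F) (at p)"
    using assms unfolding differentiable_def by blast
  show ?thesis
    unfolding wirt_eq_derivative[OF has_derivative_mult_right[OF F]] wirt_eq_derivative[OF F]
    by (simp add: field_simps)
qed

lemma wirt_transform_within_open:
  assumes "f differentiable at p" "open S" "p \<in> S" "\<And>q. q \<in> S \<Longrightarrow> f q = g q"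
  shows "wirt a g p = wirt a f p"
proof -
  obtain F where F: "(f has_derivative F) (at p)"
    using assms(1) unfolding differentiable_def by blast
  have "(g has_derivative F) (at p)"
    using has_derivative_transform_within_open[OF F assms(2,3)] assms(4) by blast
  with F show ?thesis
    by (simp add: wirt_eq_derivative)
qed

lemma holo3_differentiable:
  assumes "holo3 U f" "p \<in> U"
  shows "f differentiable at p"
  using assms unfolding holo3_def differentiable_def by blast

lemma wirt_antiholomorphic:
  assumes "holo3 U f" "p \<in> U"
  shows "wirt a (\<lambda>q. k * cnj (f q)) p = 0"
proof -
  obtain L where L: "(f has_derivative L) (at p)" and L_clinear: "\<And>(c::complex) v. L (c *s v) = c * L v"
    using assms unfolding holo3_def by blast
  have "((\<lambda>q. k * cnj (f q)) has_derivative (\<lambda>v. k * cnj (L v))) (at p)"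
    using has_derivative_mult_right[OF bounded_linear.has_derivative[OF bounded_linear_cnj L]] .
  moreover have "axis a \<i> = \<i> *s axis a (1::complex)"
    by (simp add: vec_eq_iff axis_def)
  ultimately show ?thesis
    by (simp add: wirt_eq_derivative L_clinear mult.left_commute[of k])
qed

text \<open>Indices wrap around modulo 3, so the cyclic shifts produce the signed cofactors.\<close>

definition adjugate3 :: "'a::comm_ring_1^3^3 \<Rightarrow> 'a^3^3" where
  "adjugate3 A = (\<chi> c b. A$(b+1)$(c+1) * A$(b+2)$(c+2) - A$(b+1)$(c+2) * A$(b+2)$(c+1))"

lemma numeral_3_wrap: "(4::3) = 1" "(5::3) = 2"
  by simp_all

lemma adjugate3_mult: "adjugate3 A ** A = mat (det A)"
  unfolding vec_eq_iff matrix_matrix_mult_def adjugate3_def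
  by (simp add: forall_3 sum_3 numeral_3_wrap) (simp add: det_3 mat_def algebra_simps)

lemma matrix_inv_right:
  assumes "invertible A"
  shows "A ** matrix_inv A = mat 1"
  using someI_ex[OF assms[unfolded invertible_def]] unfolding matrix_inv_def by blast

lemma adjugate3_eq_det_matrix_inv:
  assumes "invertible A"
  shows "adjugate3 A $ c $ b = det A * matrix_inv A $ c $ b"
proof -
  have "adjugate3 A = adjugate3 A ** (A ** matrix_inv A)"
    using matrix_inv_right[OF assms] by simp
  also have "\<dots> = mat (det A) ** matrix_inv A"
    by (simp add: matrix_mul_assoc adjugate3_mult)
  finally show ?thesis
    by (simp add: matrix_matrix_mult_def mat_def sum_3) (use exhaust_3[of c] in auto)
qed

lemma wirt_det3:
  assumes "\<And>i j. (\<lambda>q. h q $ i $ j) differentiable at p"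
  shows "wirt a (\<lambda>q. det (h q)) p =
    (\<Sum>i\<in>UNIV. \<Sum>j\<in>UNIV. wirt a (\<lambda>q. h q $ i $ j) p * adjugate3 (h p) $ j $ i)"
  unfolding det_3
  by (simp add: wirt_add wirt_diff wirt_mult differentiable_add differentiable_diff
      differentiable_mult assms)
    (simp add: sum_3 adjugate3_def numeral_3_wrap algebra_simps)

lemma wirt_det3_eq_trace_Gam:
  assumes "\<And>i j. (\<lambda>q. h q $ i $ j) differentiable at p" "invertible (h p)"
  shows "wirt a (\<lambda>q. det (h q)) p = det (h p) * (\<Sum>e\<in>UNIV. Gam h a e e p)"
  unfolding wirt_det3[OF assms(1)] Gam_def hinv_def adjugate3_eq_det_matrix_inv[OF assms(2)]
  by (simp add: sum_distrib_left mult_ac)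

lemma differentiable_det3:
  fixes h :: "'a::real_normed_vector \<Rightarrow> 'b::real_normed_field^3^3"
  assumes "\<And>i j. (\<lambda>q. h q $ i $ j) differentiable at p"
  shows "(\<lambda>q. det (h q)) differentiable at p"
  unfolding det_3 by (intro differentiable_add differentiable_diff differentiable_mult assms)

lemma wirt_det3_mult:
  assumes "\<And>i j. (\<lambda>q. h q $ i $ j) differentiable at p" "invertible (h p)"
    and "\<omega> differentiable at p"
  shows "wirt a (\<lambda>q. det (h q) * \<omega> q) p
    = det (h p) * (wirt a \<omega> p + (\<Sum>e\<in>UNIV. Gam h a e e p) * \<omega> p)"
  unfolding wirt_mult[OF differentiable_det3[OF assms(1)] assms(3)] wirt_det3_eq_trace_Gam[OF assms(1,2)]
  by (simp add: algebra_simps)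

definition levi_civita :: "3 \<Rightarrow> 3 \<Rightarrow> 3 \<Rightarrow> 'a::ring_1" where
  "levi_civita b c d =
     (if (b, c, d) \<in> {(1, 2, 3), (2, 3, 1), (3, 1, 2)} then 1
      else if (b, c, d) \<in> {(2, 1, 3), (1, 3, 2), (3, 2, 1)} then -1 else 0)"

lemma alternating3_eq_levi_civita:
  fixes W :: "3 \<Rightarrow> 3 \<Rightarrow> 3 \<Rightarrow> 'a::{idom, ring_char_0}"
  assumes alt1: "\<And>a b c. W a b c = - W b a c" and alt2: "\<And>a b c. W a b c = - W a c b"
  shows "W b c d = levi_civita b c d * W 1 2 3"
proof -
  have repeated_12: "W x x z = 0" for x z
    using alt1[of x x z] by (simp add: eq_neg_iff_add_eq_0)
  have repeated_23: "W x z z = 0" for x z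
    using alt2[of x z z] by (simp add: eq_neg_iff_add_eq_0)
  have repeated_13: "W x z x = 0" for x z
    using alt1[of x z x] repeated_23[of z x] by simp
  have "W 2 1 3 = - W 1 2 3" "W 1 3 2 = - W 1 2 3" "W 2 3 1 = W 1 2 3"
    "W 3 1 2 = W 1 2 3" "W 3 2 1 = - W 1 2 3"
    using alt1[of 2 1 3] alt2[of 1 3 2] alt2[of 2 3 1] alt1[of 3 1 2] alt2[of 3 2 1]
      alt1[of 3 2 1] by simp_all
  with repeated_12 repeated_23 repeated_13 have "\<forall>b c d. W b c d = levi_civita b c d * W 1 2 3"
    unfolding forall_3 by (simp add: levi_civita_def)
  then show ?thesis
    by blast
qed

lemma levi_civita_leibniz_trace:
  fixes M :: "3 \<Rightarrow> 3 \<Rightarrow> 'a::comm_ring_1"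
  shows "(\<Sum>e\<in>UNIV. M b e * levi_civita e c d) + (\<Sum>e\<in>UNIV. M c e * levi_civita b e d)
       + (\<Sum>e\<in>UNIV. M d e * levi_civita b c e) = (\<Sum>e\<in>UNIV. M e e) * levi_civita b c d"
proof -
  have "\<forall>b c d. (\<Sum>e\<in>UNIV. M b e * levi_civita e c d) + (\<Sum>e\<in>UNIV. M c e * levi_civita b e d)
       + (\<Sum>e\<in>UNIV. M d e * levi_civita b c e) = (\<Sum>e\<in>UNIV. M e e) * levi_civita b c d"
    unfolding sum_3 forall_3 by (simp add: levi_civita_def)
  then show ?thesis
    by blast
qed

lemma det3_eq_levi_civita_sum:
  "(\<Sum>a\<in>UNIV. \<Sum>b\<in>UNIV. \<Sum>c\<in>UNIV. A$a$1 * A$b$2 * A$c$3 * levi_civita a b c) = det A"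
  unfolding sum_3 det_3 by (simp add: levi_civita_def algebra_simps)

lemma nabla3_levi_civita:
  assumes "\<omega> differentiable at p"
  shows "nabla3 h a (\<lambda>q b c d. levi_civita b c d * \<omega> q) b c d p
    = levi_civita b c d * (wirt a \<omega> p + (\<Sum>e\<in>UNIV. Gam h a e e p) * \<omega> p)"
proof -
  have "nabla3 h a (\<lambda>q b c d. levi_civita b c d * \<omega> q) b c d p
    = levi_civita b c d * wirt a \<omega> p
      + ((\<Sum>e\<in>UNIV. Gam h a b e p * levi_civita e c d) + (\<Sum>e\<in>UNIV. Gam h a c e p * levi_civita b e d)
        + (\<Sum>e\<in>UNIV. Gam h a d e p * levi_civita b c e)) * \<omega> p"
    unfolding nabla3_def wirt_cmult[OF assms] by (simp add: distrib_right sum_distrib_right mult.assoc)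
  also have "\<dots> = levi_civita b c d * (wirt a \<omega> p + (\<Sum>e\<in>UNIV. Gam h a e e p) * \<omega> p)"
    by (subst levi_civita_leibniz_trace[of "\<lambda>x y. Gam h a x y p"]) (simp add: algebra_simps)
  finally show ?thesis .
qed

theorem mainTheorem10:
  fixes U :: "pt set"
    and h :: "pt \<Rightarrow> complex^3^3"
    and \<Omega> :: "pt \<Rightarrow> 3 \<Rightarrow> 3 \<Rightarrow> 3 \<Rightarrow> complex"
    and habs :: complex
  assumes U_open: "open U"
    and h_diff: "\<And>a b. (\<lambda>q. h q $ a $ b) differentiable_on U"
    and h_inv: "\<And>p. p \<in> U \<Longrightarrow> invertible (h p)"
    and \<Omega>_holo: "\<And>a b c. holo3 U (\<lambda>q. \<Omega> q a b c)"
    and \<Omega>_alt1: "\<And>p a b c. \<Omega> p a b c = - \<Omega> p b a c"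
    and \<Omega>_alt2: "\<And>p a b c. \<Omega> p a b c = - \<Omega> p a c b"
    and \<Omega>_nonvan: "\<And>p. p \<in> U \<Longrightarrow> \<Omega> p 1 2 3 \<noteq> 0"
    and habs_nz: "habs \<noteq> 0"
    and h_vol: "\<And>p e f g. p \<in> U \<Longrightarrow>
        (\<Sum>a\<in>UNIV. \<Sum>b\<in>UNIV. \<Sum>c\<in>UNIV. h p $ a $ e * h p $ b $ f * h p $ c $ g * \<Omega> p a b c)
          = habs * cnj (\<Omega> p e f g)"
  shows "\<forall>p\<in>U. \<forall>a b c d. nabla3 h a \<Omega> b c d p = 0"
proof (intro ballI allI)
  fix p a b c d
  assume pU: "p \<in> U"
  define \<omega> where "\<omega> q = \<Omega> q 1 2 3" for q
  have \<Omega>_eq: "\<Omega> = (\<lambda>q b c d. levi_civita b c d * \<omega> q)"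
    unfolding \<omega>_def by (intro ext alternating3_eq_levi_civita \<Omega>_alt1 \<Omega>_alt2)
  have h_diff_at: "(\<lambda>q. h q $ i $ j) differentiable at p" for i j
    using h_diff[of i j] pU U_open by (simp add: differentiable_on_eq_differentiable_at)
  have \<omega>_diff: "\<omega> differentiable at p"
    unfolding \<omega>_def using \<Omega>_holo pU by (rule holo3_differentiable)
  have volume: "det (h q) * \<omega> q = habs * cnj (\<omega> q)" if "q \<in> U" for q
  proof -
    have "(\<Sum>a\<in>UNIV. \<Sum>b\<in>UNIV. \<Sum>c\<in>UNIV. h q $ a $ 1 * h q $ b $ 2 * h q $ c $ 3 * \<Omega> q a b c)
        = det (h q) * \<omega> q"
      unfolding \<Omega>_eq det3_eq_levi_civita_sum[symmetric] by (simp add: sum_distrib_right mult.assoc)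
    moreover have "\<Omega> q 1 2 3 = \<omega> q"
      by (simp add: \<omega>_def)
    ultimately show ?thesis
      using h_vol[OF that, of 1 2 3] by simp
  qed
  have "det (h p) * (wirt a \<omega> p + (\<Sum>e\<in>UNIV. Gam h a e e p) * \<omega> p)
      = wirt a (\<lambda>q. det (h q) * \<omega> q) p"
    using wirt_det3_mult[OF h_diff_at h_inv[OF pU] \<omega>_diff] by simp
  also have "\<dots> = wirt a (\<lambda>q. habs * cnj (\<omega> q)) p"
    by (rule sym, rule wirt_transform_within_open[OF _ U_open pU])
      (simp_all add: volume differentiable_mult differentiable_det3 h_diff_at \<omega>_diff)
  also have "\<dots> = 0"
    unfolding \<omega>_def using \<Omega>_holo pU by (rule wirt_antiholomorphic)
  finally have "wirt a \<omega> p + (\<Sum>e\<in>UNIV. Gam h a e e p) * \<omega> p = 0"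
    using h_inv[OF pU] by (simp add: invertible_det_nz)
  then show "nabla3 h a \<Omega> b c d p = 0"
    by (simp add: \<Omega>_eq nabla3_levi_civita[OF \<omega>_diff])
qed

end
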